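(* Let $n_1,\ldots,n_N$ be positive integers and let $\mathbf{R}=(R_1,\ldots,R_N)\in\mathcal{A}^{(n_1,\ldots,n_N)}$. Then the Taylor joint spectrum $\sigma_T(\mathbf{R})$ of the commuting family of operators $(R_k)_{ij}$, $k=1,\ldots,N$, $i,j=1,\ldots,n_k$ (regarded as a subset of $\mathbb{C}^{n_1\times n_1}\times\cdots\times\mathbb{C}^{n_N\times n_N}$) satisfies $$\sigma_T(\mathbf{R})\subset\Pi^{n_1\times n_1}\times\cdots\times\Pi^{n_N\times n_N}.$$
   Context: For a positive integer $n$, $\Pi^{n\times n}:=\{M\in\mathbb{C}^{n\times n}: M+M^*>0\}$. $\mathcal{A}^{(n_1,\ldots,n_N)}$ denotes the class of $N$-tuples $\mathbf{R}=(R_1,\ldots,R_N)$ where, for some Hilbert space $\mathcal{H}_\mathbf{R}$ and some commutative algebra $\mathcal{B}_\mathbf{R}\subset L(\mathcal{H}_\mathbf{R})$, each $R_k$ is an $n_k\times n_k$ matrix with entries $(R_k)_{ij}\in\mathcal{B}_\mathbf{R}$ (regarded as an operator on $\mathbb{C}^{n_k}\otimes\mathcal{H}_\mathbf{R}$), and there is a real constant $s_\mathbf{R}>0$ with $R_k+R_k^*\geq s_\mathbf{R}I_{\mathbb{C}^{n_k}\otimes\mathcal{H}_\mathbf{R}}$ for $k=1,\ldots,N$. *)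

theory Defs
  imports "HOL-Analysis.Analysis"
begin

text \<open>The carrier is a type 'h with its additive group structure; complex scalar
multiplication sm and the inner product ip (linear in the first argument) are
explicit parameters.\<close>

definition hnorm :: "('h \<Rightarrow> 'h \<Rightarrow> complex) \<Rightarrow> 'h \<Rightarrow> real" where
  "hnorm ip x = sqrt (Re (ip x x))"

definition hilbert_space ::
  "(complex \<Rightarrow> 'h::ab_group_add \<Rightarrow> 'h) \<Rightarrow> ('h \<Rightarrow> 'h \<Rightarrow> complex) \<Rightarrow> bool" where
  "hilbert_space sm ip \<longleftrightarrow>
     (\<forall>x. sm 1 x = x) \<and>
     (\<forall>a b x. sm a (sm b x) = sm (a * b) x) \<and>
     (\<forall>a x y. sm a (x + y) = sm a x + sm a y) \<and>
     (\<forall>a b x. sm (a + b) x = sm a x + sm b x) \<and>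
     (\<forall>x y z. ip (x + y) z = ip x z + ip y z) \<and>
     (\<forall>a x y. ip (sm a x) y = a * ip x y) \<and>
     (\<forall>x y. ip y x = cnj (ip x y)) \<and>
     (\<forall>x. Im (ip x x) = 0 \<and> Re (ip x x) \<ge> 0) \<and>
     (\<forall>x. ip x x = 0 \<longrightarrow> x = 0) \<and>
     (\<forall>X :: nat \<Rightarrow> 'h.
        (\<forall>e>0. \<exists>M. \<forall>m\<ge>M. \<forall>k\<ge>M. hnorm ip (X m - X k) < e) \<longrightarrow>
        (\<exists>L. (\<lambda>m. hnorm ip (X m - L)) \<longlonglongrightarrow> 0))"

definition bounded_op ::
  "(complex \<Rightarrow> 'h::ab_group_add \<Rightarrow> 'h) \<Rightarrow> ('h \<Rightarrow> 'h \<Rightarrow> complex) \<Rightarrow> ('h \<Rightarrow> 'h) \<Rightarrow> bool" where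
  "bounded_op sm ip A \<longleftrightarrow>
     (\<forall>x y. A (x + y) = A x + A y) \<and>
     (\<forall>c x. A (sm c x) = sm c (A x)) \<and>
     (\<exists>C. \<forall>x. hnorm ip (A x) \<le> C * hnorm ip x)"

definition hadj :: "('h \<Rightarrow> 'h \<Rightarrow> complex) \<Rightarrow> ('h \<Rightarrow> 'h) \<Rightarrow> ('h \<Rightarrow> 'h)" where
  "hadj ip A = (THE B. \<forall>x y. ip (A x) y = ip x (B y))"

definition comm_op_algebra ::
  "(complex \<Rightarrow> 'h::ab_group_add \<Rightarrow> 'h) \<Rightarrow> ('h \<Rightarrow> 'h \<Rightarrow> complex) \<Rightarrow> ('h \<Rightarrow> 'h) set \<Rightarrow> bool" where
  "comm_op_algebra sm ip B \<longleftrightarrow>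
     B \<subseteq> {A. bounded_op sm ip A} \<and>
     (\<lambda>x. 0) \<in> B \<and>
     (\<forall>A\<in>B. \<forall>C\<in>B. (\<lambda>x. A x + C x) \<in> B) \<and>
     (\<forall>c. \<forall>A\<in>B. (\<lambda>x. sm c (A x)) \<in> B) \<and>
     (\<forall>A\<in>B. \<forall>C\<in>B. A \<circ> C \<in> B) \<and>
     (\<forall>A\<in>B. \<forall>C\<in>B. A \<circ> C = C \<circ> A)"

text \<open>An n x n operator matrix M (entries M i j, i,j < n) acts on
C^n \<otimes> H = H^n, whose elements are x with components x i, i < n.\<close>

definition opmat_apply :: "nat \<Rightarrow> (nat \<Rightarrow> nat \<Rightarrow> 'h \<Rightarrow> 'h::ab_group_add) \<Rightarrow> (nat \<Rightarrow> 'h) \<Rightarrow> nat \<Rightarrow> 'h" where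
  "opmat_apply n M x = (\<lambda>i. \<Sum>j<n. M i j (x j))"

definition opmat_adj :: "('h \<Rightarrow> 'h \<Rightarrow> complex) \<Rightarrow> (nat \<Rightarrow> nat \<Rightarrow> 'h \<Rightarrow> 'h) \<Rightarrow> nat \<Rightarrow> nat \<Rightarrow> 'h \<Rightarrow> 'h" where
  "opmat_adj ip M = (\<lambda>i j. hadj ip (M j i))"

definition opmat_add :: "(nat \<Rightarrow> nat \<Rightarrow> 'h \<Rightarrow> 'h::ab_group_add) \<Rightarrow> (nat \<Rightarrow> nat \<Rightarrow> 'h \<Rightarrow> 'h) \<Rightarrow> nat \<Rightarrow> nat \<Rightarrow> 'h \<Rightarrow> 'h" where
  "opmat_add M M' = (\<lambda>i j x. M i j x + M' i j x)"

definition ip_n :: "('h \<Rightarrow> 'h \<Rightarrow> complex) \<Rightarrow> nat \<Rightarrow> (nat \<Rightarrow> 'h) \<Rightarrow> (nat \<Rightarrow> 'h) \<Rightarrow> complex" where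
  "ip_n ip n x y = (\<Sum>i<n. ip (x i) (y i))"

definition opmat_ge_scalar ::
  "('h::ab_group_add \<Rightarrow> 'h \<Rightarrow> complex) \<Rightarrow> nat \<Rightarrow> (nat \<Rightarrow> nat \<Rightarrow> 'h \<Rightarrow> 'h) \<Rightarrow> real \<Rightarrow> bool" where
  "opmat_ge_scalar ip n M s \<longleftrightarrow>
     (\<forall>x :: nat \<Rightarrow> 'h.
        Im (ip_n ip n (opmat_apply n M x) x - of_real s * ip_n ip n x x) = 0 \<and>
        Re (ip_n ip n (opmat_apply n M x) x - of_real s * ip_n ip n x x) \<ge> 0)"

text \<open>The class A^{(n_1,...,n_N)} (for a fixed Hilbert space H).  The tuple R is
R k i j = (R_k)_{ij} for k < N and i, j < n k (indices 0-based).\<close>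
definition class_A ::
  "(complex \<Rightarrow> 'h::ab_group_add \<Rightarrow> 'h) \<Rightarrow> ('h \<Rightarrow> 'h \<Rightarrow> complex) \<Rightarrow> nat \<Rightarrow> (nat \<Rightarrow> nat)
     \<Rightarrow> (nat \<Rightarrow> nat \<Rightarrow> nat \<Rightarrow> 'h \<Rightarrow> 'h) \<Rightarrow> bool" where
  "class_A sm ip N n R \<longleftrightarrow>
     hilbert_space sm ip \<and>
     (\<exists>B. comm_op_algebra sm ip B \<and>
          (\<forall>k<N. \<forall>i<n k. \<forall>j<n k. R k i j \<in> B)) \<and>
     (\<exists>s::real. s > 0 \<and>
        (\<forall>k<N. opmat_ge_scalar ip (n k) (opmat_add (R k) (opmat_adj ip (R k))) s))"

text \<open>For a commuting family T j (j in a finite index set I with a strict linear order lt) on X,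
the Koszul complex has chain space \<Lambda>(C^I) \<otimes> X, represented as functions
f from subsets S of I to X (f S = coefficient of e_S; f S = 0 unless S \<subseteq> I).\<close>

definition koszul_chains :: "'i set \<Rightarrow> ('i set \<Rightarrow> 'h::zero) set" where
  "koszul_chains I = {f. \<forall>S. \<not> S \<subseteq> I \<longrightarrow> f S = 0}"

definition koszul_d ::
  "('i \<Rightarrow> 'i \<Rightarrow> bool) \<Rightarrow> 'i set \<Rightarrow> ('i \<Rightarrow> 'h \<Rightarrow> 'h::ab_group_add) \<Rightarrow> ('i set \<Rightarrow> 'h) \<Rightarrow> 'i set \<Rightarrow> 'h" where
  "koszul_d lt I T f = (\<lambda>S. if S \<subseteq> I then
      (\<Sum>j\<in>I - S. (if even (card {i\<in>S. lt i j}) then T j (f (insert j S))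
                    else - T j (f (insert j S))))
     else 0)"

text \<open>Exactness of the Koszul complex (in every degree; d is homogeneous).\<close>
definition koszul_exact :: "('i \<Rightarrow> 'i \<Rightarrow> bool) \<Rightarrow> 'i set \<Rightarrow> ('i \<Rightarrow> 'h \<Rightarrow> 'h::ab_group_add) \<Rightarrow> bool" where
  "koszul_exact lt I T \<longleftrightarrow>
     (\<forall>f\<in>koszul_chains I. (\<forall>S. koszul_d lt I T f S = 0) \<longrightarrow>
        (\<exists>g\<in>koszul_chains I. f = koszul_d lt I T g))"

definition taylor_spectrum ::
  "(complex \<Rightarrow> 'h::ab_group_add \<Rightarrow> 'h) \<Rightarrow> ('i \<Rightarrow> 'i \<Rightarrow> bool) \<Rightarrow> 'i set \<Rightarrow> ('i \<Rightarrow> 'h \<Rightarrow> 'h) \<Rightarrow> ('i \<Rightarrow> complex) set" where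
  "taylor_spectrum sm lt I T =
     {z. (\<forall>j. j \<notin> I \<longrightarrow> z j = 0) \<and>
          \<not> koszul_exact lt I (\<lambda>j x. T j x - sm (z j) x)}"

definition idx_set :: "nat \<Rightarrow> (nat \<Rightarrow> nat) \<Rightarrow> (nat \<times> nat \<times> nat) set" where
  "idx_set N n = {(k, i, j). k < N \<and> i < n k \<and> j < n k}"

text \<open>Lexicographic strict order on index triples (used only to fix the signs
of the Koszul complex; the spectrum does not depend on this choice).\<close>
definition lex3 :: "nat \<times> nat \<times> nat \<Rightarrow> nat \<times> nat \<times> nat \<Rightarrow> bool" where
  "lex3 = (\<lambda>(k, i, j) (k', i', j'). k < k' \<or> (k = k' \<and> (i < i' \<or> (i = i' \<and> j < j'))))"

definition flat_family :: "(nat \<Rightarrow> nat \<Rightarrow> nat \<Rightarrow> 'h \<Rightarrow> 'h) \<Rightarrow> nat \<times> nat \<times> nat \<Rightarrow> 'h \<Rightarrow> 'h" where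
  "flat_family R = (\<lambda>(k, i, j). R k i j)"

definition Pi_mat :: "nat \<Rightarrow> (nat \<Rightarrow> nat \<Rightarrow> complex) \<Rightarrow> bool" where
  "Pi_mat n M \<longleftrightarrow>
     (\<forall>v :: nat \<Rightarrow> complex. (\<exists>i<n. v i \<noteq> 0) \<longrightarrow>
        Re (\<Sum>i<n. \<Sum>j<n. cnj (v i) * (M i j + cnj (M j i)) * v j) > 0)"

end

theory Submission
  imports Defs
begin

(* Suppose a point z of the Taylor spectrum had a block Z = (z (k, i, j))_{i,j} outside \<Pi>, i.e.
   Re <(Z + Z^H) v, v> \<le> 0 for some v \<noteq> 0 (^H: conjugate transpose).  Then the combination
   U = \<Sum>_{i,j} cnj (v_i) v_j (R_k,ij - z_k,ij) of the shifted family satisfies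
   Re <U x, x> \<ge> (s/2) |v|^2 |x|^2, because R_k + R_k^H \<ge> s.  By Lax--Milgram (proved from the
   Riesz representation for the equivalent inner product <U x, U y>, obtained by minimising a
   quadratic energy) U is invertible, and U^-1 commutes with the shifted family.  Hence the unit
   lies in the ideal generated by the shifted family in its commutant, and wedging with the
   coefficients of U^-1 U = 1 is a contracting homotopy of the Koszul complex.  So the Koszul
   complex is exact, contradicting the choice of z. *)

section \<open>Exactness of the Koszul complex\<close>

definition signed :: "bool \<Rightarrow> 'a::ab_group_add \<Rightarrow> 'a" where
  "signed b x = (if b then x else - x)"

lemma signed_signed: "signed a (signed b x) = signed (a = b) x"
  by (auto simp: signed_def)

lemma signed_True [simp]: "signed True x = x"
  by (simp add: signed_def)

lemma signed_add: "signed b (x + y) = signed b x + signed b y"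
  by (simp add: signed_def)

lemma signed_opposite: "(a \<longleftrightarrow> \<not> b) \<Longrightarrow> signed a x + signed b x = 0"
  by (auto simp: signed_def)

lemma signed_sum: "signed b (sum f A) = (\<Sum>i\<in>A. signed b (f i))"
  by (auto simp: signed_def sum_negf)

lemma (in additive) signed: "f (signed b x) = signed b (f x)"
  by (simp add: signed_def minus)

definition koszul_parity :: "('i \<Rightarrow> 'i \<Rightarrow> bool) \<Rightarrow> 'i set \<Rightarrow> 'i \<Rightarrow> bool" where
  "koszul_parity lt S j = even (card {i\<in>S. lt i j})"

lemma koszul_d_signed:
  "koszul_d lt I T f S =
     (if S \<subseteq> I then (\<Sum>j\<in>I - S. signed (koszul_parity lt S j) (T j (f (insert j S)))) else 0)"
  unfolding koszul_d_def signed_def koszul_parity_def by simp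

lemma koszul_parity_insert_self:
  assumes "\<not> lt j j"
  shows "koszul_parity lt (insert j S) j = koszul_parity lt S j"
proof -
  have "{i\<in>insert j S. lt i j} = {i\<in>S. lt i j}"
    using assms by auto
  then show ?thesis
    unfolding koszul_parity_def by simp
qed

lemma koszul_parity_remove_self:
  assumes "\<not> lt l l"
  shows "koszul_parity lt (S - {l}) l = koszul_parity lt S l"
proof -
  have "{i\<in>S - {l}. lt i l} = {i\<in>S. lt i l}"
    using assms by auto
  then show ?thesis
    unfolding koszul_parity_def by simp
qed

text \<open>Inserting \<open>j\<close> and removing \<open>l\<close> in either order gives opposite signs; this is what
  makes the cross terms of the homotopy formula cancel.\<close>
lemma koszul_parity_swap:
  assumes "finite S" "j \<notin> S" "l \<in> S" "lt j l \<longleftrightarrow> \<not> lt l j"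
  shows "(koszul_parity lt S j = koszul_parity lt (insert j S) l) \<longleftrightarrow>
         \<not> (koszul_parity lt S l = koszul_parity lt (S - {l}) j)"
proof -
  define a where "a = card {i\<in>S. lt i l}"
  define b where "b = card {i\<in>S. lt i j}"
  have fin: "finite {i\<in>S. lt i l}" "finite {i\<in>S. lt i j}"
    using assms(1) by auto
  show ?thesis
  proof (cases "lt j l")
    case True
    have "{i\<in>insert j S. lt i l} = insert j {i\<in>S. lt i l}"
      using True by auto
    then have "card {i\<in>insert j S. lt i l} = a + 1"
      using fin assms(2) unfolding a_def by simp
    moreover have "{i\<in>S - {l}. lt i j} = {i\<in>S. lt i j}"
      using True assms(4) by auto
    ultimately show ?thesis
      unfolding koszul_parity_def a_def b_def by auto
  next
    case False
    have "{i\<in>insert j S. lt i l} = {i\<in>S. lt i l}"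
      using False by auto
    then have a: "card {i\<in>insert j S. lt i l} = a"
      unfolding a_def by simp
    have "{i\<in>S - {l}. lt i j} = {i\<in>S. lt i j} - {l}" and "l \<in> {i\<in>S. lt i j}"
      using False assms(3,4) by auto
    then have b: "card {i\<in>S - {l}. lt i j} = b - 1" and "b \<ge> 1"
      using fin unfolding b_def by (auto simp: card_gt_0_iff Suc_le_eq)
    then have "even (b - 1) \<longleftrightarrow> odd b"
      by (cases b) auto
    then show ?thesis
      unfolding koszul_parity_def a b a_def[symmetric] b_def[symmetric] by auto
  qed
qed

text \<open>Exterior multiplication by \<open>\<Sum>\<^sub>l C\<^sub>l e\<^sub>l\<close>, with operator coefficients \<open>C\<^sub>l\<close>.\<close>
definition koszul_wedge ::
  "('i \<Rightarrow> 'i \<Rightarrow> bool) \<Rightarrow> 'i set \<Rightarrow> ('i \<Rightarrow> 'h \<Rightarrow> 'h::ab_group_add) \<Rightarrow> ('i set \<Rightarrow> 'h) \<Rightarrow> 'i set \<Rightarrow> 'h"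
where
  "koszul_wedge lt I C f S =
     (if S \<subseteq> I then (\<Sum>l\<in>S. signed (koszul_parity lt S l) (C l (f (S - {l})))) else 0)"

lemma koszul_wedge_chain: "koszul_wedge lt I C f \<in> koszul_chains I"
  unfolding koszul_chains_def koszul_wedge_def by simp

locale koszul_data =
  fixes lt :: "'i \<Rightarrow> 'i \<Rightarrow> bool" and I :: "'i set"
    and T :: "'i \<Rightarrow> 'h \<Rightarrow> 'h::ab_group_add" and C :: "'i \<Rightarrow> 'h \<Rightarrow> 'h"
  assumes finite_I: "finite I"
    and irrefl: "\<And>j. j \<in> I \<Longrightarrow> \<not> lt j j"
    and total: "\<And>j l. j \<in> I \<Longrightarrow> l \<in> I \<Longrightarrow> j \<noteq> l \<Longrightarrow> lt j l \<longleftrightarrow> \<not> lt l j"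
    and T_add: "\<And>j x y. j \<in> I \<Longrightarrow> T j (x + y) = T j x + T j y"
    and C_add: "\<And>l x y. l \<in> I \<Longrightarrow> C l (x + y) = C l x + C l y"
    and commute: "\<And>j l x. j \<in> I \<Longrightarrow> l \<in> I \<Longrightarrow> T j (C l x) = C l (T j x)"
begin

lemma koszul_d_wedge:
  assumes "S \<subseteq> I" "j \<in> I - S"
  shows "signed (koszul_parity lt S j) (T j (koszul_wedge lt I C f (insert j S))) =
    C j (T j (f S)) +
    (\<Sum>l\<in>S. signed (koszul_parity lt S j = koszul_parity lt (insert j S) l)
                   (T j (C l (f (insert j S - {l})))))"
proof -
  interpret T: additive "T j" using assms T_add by unfold_locales blast
  have "finite S" using assms(1) finite_I finite_subset by blast
  moreover have "insert j S - {j} = S" "insert j S \<subseteq> I"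
    using assms by auto
  ultimately show ?thesis
    using assms irrefl koszul_parity_insert_self[of lt j S] commute[of j j]
    by (simp add: koszul_wedge_def T.add T.sum T.signed signed_add signed_sum signed_signed)
qed

lemma koszul_wedge_d:
  assumes "S \<subseteq> I" "l \<in> S"
  shows "signed (koszul_parity lt S l) (C l (koszul_d lt I T f (S - {l}))) =
    C l (T l (f S)) +
    (\<Sum>j\<in>I - S. signed (koszul_parity lt S l = koszul_parity lt (S - {l}) j)
                     (C l (T j (f (insert j (S - {l}))))))"
proof -
  interpret C: additive "C l" using assms C_add by unfold_locales blast
  have "I - (S - {l}) = insert l (I - S)" "insert l (S - {l}) = S" "S - {l} \<subseteq> I"
    using assms by auto
  moreover have "\<not> lt l l"
    using assms irrefl by blast
  ultimately show ?thesis
    using assms finite_I koszul_parity_remove_self[of lt l S]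
    by (simp add: koszul_d_signed C.add C.sum C.signed signed_add signed_sum signed_signed)
qed

lemma koszul_wedge_zero: "koszul_wedge lt I C (\<lambda>S. 0) S = 0"
proof -
  have "C l 0 = 0" if "l \<in> I" for l
    using C_add[OF that, of 0 0] by simp
  then show ?thesis
    unfolding koszul_wedge_def by (auto simp: signed_def intro!: sum.neutral)
qed

lemma koszul_homotopy:
  assumes "S \<subseteq> I"
  shows "koszul_d lt I T (koszul_wedge lt I C f) S + koszul_wedge lt I C (koszul_d lt I T f) S
       = (\<Sum>j\<in>I. C j (T j (f S)))"
proof -
  define X where "X j l = signed (koszul_parity lt S j = koszul_parity lt (insert j S) l)
                   (T j (C l (f (insert j S - {l}))))" for j l
  define Y where "Y l j = signed (koszul_parity lt S l = koszul_parity lt (S - {l}) j)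
                   (C l (T j (f (insert j (S - {l})))))" for l j
  have "finite S" using assms finite_I finite_subset by blast
  have cancel: "X j l + Y l j = 0" if "j \<in> I - S" "l \<in> S" for j l
  proof -
    have "insert j S - {l} = insert j (S - {l})" "lt j l \<longleftrightarrow> \<not> lt l j"
      using that assms total[of j l] by auto
    moreover have "T j (C l x) = C l (T j x)" for x
      using that assms commute[of j l] by auto
    ultimately show ?thesis
      unfolding X_def Y_def using that
      by (simp add: signed_opposite koszul_parity_swap[OF \<open>finite S\<close>])
  qed
  have "koszul_d lt I T (koszul_wedge lt I C f) S
      = (\<Sum>j\<in>I - S. signed (koszul_parity lt S j) (T j (koszul_wedge lt I C f (insert j S))))"
    using assms by (simp add: koszul_d_signed)
  also have "\<dots> = (\<Sum>j\<in>I - S. C j (T j (f S)) + (\<Sum>l\<in>S. X j l))"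
    unfolding X_def by (rule sum.cong[OF refl koszul_d_wedge[OF assms]])
  finally have d_wedge: "koszul_d lt I T (koszul_wedge lt I C f) S = \<dots>" .
  have "koszul_wedge lt I C (koszul_d lt I T f) S
      = (\<Sum>l\<in>S. signed (koszul_parity lt S l) (C l (koszul_d lt I T f (S - {l}))))"
    using assms by (simp add: koszul_wedge_def)
  also have "\<dots> = (\<Sum>l\<in>S. C l (T l (f S)) + (\<Sum>j\<in>I - S. Y l j))"
    unfolding Y_def by (rule sum.cong[OF refl koszul_wedge_d[OF assms]])
  finally have wedge_d: "koszul_wedge lt I C (koszul_d lt I T f) S = \<dots>" .
  have "koszul_d lt I T (koszul_wedge lt I C f) S + koszul_wedge lt I C (koszul_d lt I T f) S
      = (\<Sum>j\<in>I - S. C j (T j (f S))) + (\<Sum>l\<in>S. C l (T l (f S)))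
        + ((\<Sum>j\<in>I - S. \<Sum>l\<in>S. X j l) + (\<Sum>j\<in>I - S. \<Sum>l\<in>S. Y l j))"
    unfolding d_wedge wedge_d sum.distrib sum.swap[of _ S "I - S"] by (simp only: ac_simps)
  also have "\<dots> = (\<Sum>j\<in>I - S. C j (T j (f S))) + (\<Sum>l\<in>S. C l (T l (f S)))
        + (\<Sum>j\<in>I - S. \<Sum>l\<in>S. X j l + Y l j)"
    by (simp only: sum.distrib)
  also have "\<dots> = (\<Sum>j\<in>I. C j (T j (f S)))"
    using cancel sum.subset_diff[OF assms finite_I, symmetric] by simp
  finally show ?thesis .
qed

lemma koszul_exact_if_unit:
  assumes "\<And>x. (\<Sum>j\<in>I. C j (T j x)) = x"
  shows "koszul_exact lt I T"
  unfolding koszul_exact_def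
proof (intro ballI impI)
  fix f assume f: "f \<in> koszul_chains I" and closed: "\<forall>S. koszul_d lt I T f S = 0"
  have "f S = koszul_d lt I T (koszul_wedge lt I C f) S" for S
  proof (cases "S \<subseteq> I")
    case True
    have "koszul_d lt I T f = (\<lambda>S. 0)"
      using closed by blast
    then show ?thesis
      using koszul_homotopy[OF True, of f] assms by (simp add: koszul_wedge_zero)
  next
    case False
    then show ?thesis using f by (simp add: koszul_d_signed koszul_chains_def)
  qed
  then show "\<exists>g\<in>koszul_chains I. f = koszul_d lt I T g"
    using koszul_wedge_chain by blast
qed

end

section \<open>Elementary Hilbert space geometry\<close>

locale hilbert = module sm for sm :: "complex \<Rightarrow> 'h::ab_group_add \<Rightarrow> 'h" +
  fixes ip :: "'h \<Rightarrow> 'h \<Rightarrow> complex"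
  assumes ip_add_left: "ip (x + y) z = ip x z + ip y z"
    and ip_scale_left: "ip (sm a x) y = a * ip x y"
    and ip_cnj: "ip y x = cnj (ip x y)"
    and ip_self_Im: "Im (ip x x) = 0"
    and ip_self_nonneg: "Re (ip x x) \<ge> 0"
    and ip_self_eq_0: "ip x x = 0 \<Longrightarrow> x = 0"
    and complete: "\<forall>e>0. \<exists>M. \<forall>m\<ge>M. \<forall>k\<ge>M. hnorm ip (X m - X k) < e
                   \<Longrightarrow> \<exists>L. (\<lambda>m. hnorm ip (X m - L)) \<longlonglongrightarrow> 0"

lemma hilbert_space_imp_hilbert: "hilbert_space sm ip \<Longrightarrow> hilbert sm ip"
  unfolding hilbert_space_def by unfold_locales (elim conjE; metis)+

context hilbert
begin

abbreviation nrm :: "'h \<Rightarrow> real" where "nrm \<equiv> hnorm ip"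

lemma ip_add_right: "ip z (x + y) = ip z x + ip z y"
proof -
  have "ip z (x + y) = cnj (ip (x + y) z)"
    by (rule ip_cnj)
  then show ?thesis
    by (simp add: ip_add_left ip_cnj[of x z] ip_cnj[of y z])
qed

lemma ip_scale_right: "ip x (sm a y) = cnj a * ip x y"
proof -
  have "ip x (sm a y) = cnj (ip (sm a y) x)"
    by (rule ip_cnj)
  then show ?thesis
    by (simp add: ip_scale_left ip_cnj[of y x])
qed

sublocale ip_left: additive "\<lambda>x. ip x y"
  by unfold_locales (rule ip_add_left)

sublocale ip_right: additive "ip y"
  by unfold_locales (rule ip_add_right)

lemmas ip_zero_left [simp] = ip_left.zero
  and ip_zero_right [simp] = ip_right.zero

lemma nrm_nonneg: "nrm x \<ge> 0"
  using ip_self_nonneg[of x] by (simp add: hnorm_def)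

lemma nrm_square: "(nrm x)\<^sup>2 = Re (ip x x)"
  using ip_self_nonneg[of x] by (simp add: hnorm_def)

lemma ip_self_nrm: "ip x x = of_real ((nrm x)\<^sup>2)"
  using ip_self_Im[of x] ip_self_nonneg[of x] by (simp add: hnorm_def complex_eq_iff)

lemma nrm_eq_0_iff [simp]: "nrm x = 0 \<longleftrightarrow> x = 0"
proof
  assume "nrm x = 0"
  then show "x = 0"
    using ip_self_eq_0 ip_self_nrm[of x] by simp
qed (simp add: hnorm_def)

lemma nrm_zero [simp]: "nrm 0 = 0"
  by simp

lemma nrm_pos: "x \<noteq> 0 \<Longrightarrow> nrm x > 0"
  using nrm_nonneg[of x] by (simp add: order_le_less)

lemma nrm_scale: "nrm (sm a x) = cmod a * nrm x"
proof -
  have "ip (sm a x) (sm a x) = (a * cnj a) * ip x x"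
    by (simp add: ip_scale_left ip_scale_right)
  then have "of_real ((nrm (sm a x))\<^sup>2) = of_real ((cmod a)\<^sup>2) * complex_of_real ((nrm x)\<^sup>2)"
    by (simp only: ip_self_nrm complex_norm_square)
  then have "(nrm (sm a x))\<^sup>2 = (cmod a * nrm x)\<^sup>2"
    by (simp only: of_real_mult[symmetric] of_real_eq_iff power_mult_distrib)
  then show ?thesis
    using nrm_nonneg by (simp add: power2_eq_iff_nonneg)
qed

lemma nrm_minus: "nrm (- x) = nrm x"
  using nrm_scale[of "-1" x] by simp

lemma nrm_add_square: "(nrm (x + y))\<^sup>2 = (nrm x)\<^sup>2 + (nrm y)\<^sup>2 + 2 * Re (ip x y)"
proof -
  have "ip (x + y) (x + y) = ip x x + ip y y + (ip x y + cnj (ip x y))"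
    by (simp add: ip_add_left ip_add_right ip_cnj[of y x] algebra_simps)
  then have "Re (ip (x + y) (x + y)) = Re (ip x x) + Re (ip y y) + 2 * Re (ip x y)"
    by simp
  then show ?thesis
    by (simp add: nrm_square)
qed

lemma nrm_diff_square: "(nrm (x - y))\<^sup>2 = (nrm x)\<^sup>2 + (nrm y)\<^sup>2 - 2 * Re (ip x y)"
  using nrm_add_square[of x "- y"] by (simp add: nrm_minus ip_right.minus)

lemma cauchy_schwarz: "cmod (ip x y) \<le> nrm x * nrm y"
proof (cases "y = 0")
  case False
  define p where "p = ip x y"
  define t where "t = p / of_real ((nrm y)\<^sup>2)"
  have y: "nrm y > 0"
    using nrm_pos[OF False] .
  have "Re (cnj t * p) = (cmod p)\<^sup>2 / (nrm y)\<^sup>2"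
  proof -
    have "cnj t * p = (p * cnj p) / of_real ((nrm y)\<^sup>2)"
      by (simp add: t_def)
    also have "p * cnj p = of_real ((cmod p)\<^sup>2)"
      using complex_norm_square[of p] by simp
    finally show ?thesis
      by (simp only: Re_divide_of_real Re_complex_of_real)
  qed
  moreover have "(cmod t)\<^sup>2 * (nrm y)\<^sup>2 = (cmod p)\<^sup>2 / (nrm y)\<^sup>2"
  proof -
    have "cmod t = cmod p / (nrm y)\<^sup>2"
      using y by (simp add: t_def norm_divide norm_power)
    then show ?thesis
      using y by (simp add: field_simps power2_eq_square)
  qed
  moreover have "0 \<le> (nrm (x - sm t y))\<^sup>2"
    by simp
  ultimately have "(cmod p)\<^sup>2 / (nrm y)\<^sup>2 \<le> (nrm x)\<^sup>2"
    by (simp add: nrm_diff_square nrm_scale ip_scale_right p_def power_mult_distrib)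
  then have "(cmod p)\<^sup>2 \<le> (nrm x * nrm y)\<^sup>2"
    using y False by (simp add: divide_le_eq power_mult_distrib)
  then show ?thesis
    using nrm_nonneg unfolding p_def by (meson mult_nonneg_nonneg power2_le_imp_le)
qed simp

lemma nrm_triangle: "nrm (x + y) \<le> nrm x + nrm y"
proof -
  have "Re (ip x y) \<le> nrm x * nrm y"
    using cauchy_schwarz[of x y] complex_Re_le_cmod order_trans by blast
  then have "(nrm (x + y))\<^sup>2 \<le> (nrm x + nrm y)\<^sup>2"
    by (simp add: nrm_add_square power2_sum)
  then show ?thesis
    using nrm_nonneg by (meson add_nonneg_nonneg power2_le_imp_le)
qed

lemma nrm_reverse_triangle: "\<bar>nrm x - nrm y\<bar> \<le> nrm (x - y)"
  using nrm_triangle[of "x - y" y] nrm_triangle[of "y - x" x] nrm_minus[of "x - y"] by simp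

lemma parallelogram: "(nrm (x + y))\<^sup>2 + (nrm (x - y))\<^sup>2 = 2 * (nrm x)\<^sup>2 + 2 * (nrm y)\<^sup>2"
  by (simp add: nrm_add_square nrm_diff_square)

end
section \<open>Riesz representation and the Lax--Milgram lemma\<close>

context hilbert
begin

lemma bounded_op_add: "bounded_op sm ip A \<Longrightarrow> A (x + y) = A x + A y"
  and bounded_op_scale: "bounded_op sm ip A \<Longrightarrow> A (sm c x) = sm c (A x)"
  and bounded_op_bound: "bounded_op sm ip A \<Longrightarrow> \<exists>C. \<forall>x. nrm (A x) \<le> C * nrm x"
  unfolding bounded_op_def by blast+

lemma bounded_op_diff: "bounded_op sm ip A \<Longrightarrow> A (x - y) = A x - A y"
  by (rule additive.diff, unfold_locales) (rule bounded_op_add)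

definition bounded_functional :: "('h \<Rightarrow> complex) \<Rightarrow> bool" where
  "bounded_functional f \<longleftrightarrow>
     (\<forall>x y. f (x + y) = f x + f y) \<and> (\<forall>c x. f (sm c x) = c * f x) \<and>
     (\<exists>D. \<forall>x. cmod (f x) \<le> D * nrm x)"

lemma bounded_functional_ip:
  assumes "bounded_op sm ip A"
  shows "bounded_functional (\<lambda>x. ip (A x) y)"
proof -
  obtain C where C: "\<And>x. nrm (A x) \<le> C * nrm x"
    using bounded_op_bound[OF assms] by blast
  have "cmod (ip (A x) y) \<le> C * nrm y * nrm x" for x
    using cauchy_schwarz[of "A x" y] C[of x] nrm_nonneg[of y]
    by (smt (verit, best) mult.commute mult.left_commute mult_right_mono)
  then show ?thesis
    unfolding bounded_functional_def
    by (auto simp: bounded_op_add[OF assms] bounded_op_scale[OF assms] ip_add_left ip_scale_left)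
qed

lemma tendsto_lipschitz:
  assumes "(\<lambda>k. nrm (X k - L)) \<longlonglongrightarrow> 0" "\<And>x y. \<bar>g x - g y\<bar> \<le> C * nrm (x - y)"
  shows "(\<lambda>k. g (X k)) \<longlonglongrightarrow> g L"
proof -
  have "(\<lambda>k. g (X k) - g L) \<longlonglongrightarrow> 0"
  proof (rule Lim_null_comparison)
    show "\<forall>\<^sub>F k in sequentially. norm (g (X k) - g L) \<le> C * nrm (X k - L)"
      using assms(2) by simp
    show "(\<lambda>k. C * nrm (X k - L)) \<longlonglongrightarrow> 0"
      using assms(1) by (rule tendsto_mult_right_zero)
  qed
  then show ?thesis
    by (simp add: LIM_zero_iff)
qed

text \<open>The Dirichlet-type energy whose minimiser represents \<open>f\<close> in the inner product
  \<open>\<langle>P x, P y\<rangle>\<close>.\<close>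
definition energy :: "('h \<Rightarrow> 'h) \<Rightarrow> ('h \<Rightarrow> complex) \<Rightarrow> 'h \<Rightarrow> real" where
  "energy P f x = (nrm (P x))\<^sup>2 - 2 * Re (f x)"

context
  fixes P :: "'h \<Rightarrow> 'h" and f :: "'h \<Rightarrow> complex" and \<delta> :: real
  assumes P: "bounded_op sm ip P" and P_below: "\<And>x. \<delta> * nrm x \<le> nrm (P x)" and \<delta>: "\<delta> > 0"
    and f: "bounded_functional f"
begin

lemma f_add: "f (x + y) = f x + f y"
  and f_scale: "f (sm c x) = c * f x"
  and f_bound: "\<exists>D. \<forall>x. cmod (f x) \<le> D * nrm x"
  using f unfolding bounded_functional_def by blast+

lemma f_diff: "f (x - y) = f x - f y"
  by (rule additive.diff, unfold_locales) (rule f_add)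

lemma energy_bdd_below: "bdd_below (range (energy P f))"
proof -
  obtain D where D: "\<And>x. cmod (f x) \<le> D * nrm x"
    using f_bound by blast
  have "- (D / \<delta>)\<^sup>2 \<le> energy P f x" for x
  proof -
    have "(\<delta> * nrm x)\<^sup>2 \<le> (nrm (P x))\<^sup>2"
      using P_below[of x] \<delta> nrm_nonneg[of x] by (simp add: power_mono)
    moreover have "Re (f x) \<le> D * nrm x"
      using D[of x] complex_Re_le_cmod order_trans by blast
    moreover have "(\<delta> * nrm x - D / \<delta>)\<^sup>2 = (\<delta> * nrm x)\<^sup>2 - 2 * D * nrm x + (D / \<delta>)\<^sup>2"
      using \<delta> by (simp add: power2_diff field_simps power2_eq_square)
    moreover have "0 \<le> (\<delta> * nrm x - D / \<delta>)\<^sup>2"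
      by simp
    ultimately show ?thesis
      unfolding energy_def by linarith
  qed
  then show ?thesis
    by (meson bdd_belowI2)
qed

lemma energy_midpoint:
  "energy P f a + energy P f b = 2 * energy P f (sm (1/2) (a + b)) + (nrm (P (a - b)))\<^sup>2 / 2"
proof -
  have "P (sm (1/2) (a + b)) = sm (1/2) (P a + P b)"
    by (simp add: bounded_op_add[OF P] bounded_op_scale[OF P])
  then have "(nrm (P (sm (1/2) (a + b))))\<^sup>2 = (nrm (P a + P b))\<^sup>2 / 4"
    by (simp add: nrm_scale power_mult_distrib power2_eq_square)
  moreover have "Re (f (sm (1/2) (a + b))) = (Re (f a) + Re (f b)) / 2"
    by (simp add: f_add f_scale)
  ultimately show ?thesis
    unfolding energy_def using parallelogram[of "P a" "P b"] bounded_op_diff[OF P] by simp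
qed

lemma energy_minimizing_Cauchy:
  assumes min: "\<And>x. m \<le> energy P f x" and X: "\<And>k. energy P f (X k) < m + 1 / (real k + 1)"
  shows "\<forall>e>0. \<exists>M. \<forall>a\<ge>M. \<forall>b\<ge>M. nrm (X a - X b) < e"
proof (intro allI impI)
  fix e :: real
  assume e: "e > 0"
  have step: "\<delta>\<^sup>2 * (nrm (X a - X b))\<^sup>2 \<le> 4 * (1 / (real a + 1) + 1 / (real b + 1))" for a b
  proof -
    have "\<delta>\<^sup>2 * (nrm (X a - X b))\<^sup>2 \<le> (nrm (P (X a - X b)))\<^sup>2"
      using P_below \<delta> nrm_nonneg by (simp add: power_mono flip: power_mult_distrib)
    also have "\<dots> = 2 * (energy P f (X a) + energy P f (X b) - 2 * energy P f (sm (1/2) (X a + X b)))"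
      using energy_midpoint[of "X a" "X b"] by simp
    also have "\<dots> \<le> 4 * (1 / (real a + 1) + 1 / (real b + 1))"
    proof -
      have "0 < 1 / (real a + 1)" "0 < 1 / (real b + 1)"
        by simp_all
      then show ?thesis
        using min[of "sm (1/2) (X a + X b)"] X[of a] X[of b] by (smt (verit))
    qed
    finally show ?thesis .
  qed
  obtain M :: nat where "8 / (\<delta>\<^sup>2 * e\<^sup>2) < real M"
    using reals_Archimedean2 by blast
  then have M: "8 / (\<delta>\<^sup>2 * e\<^sup>2) < real M + 1"
    by simp
  have "nrm (X a - X b) < e" if "M \<le> a" "M \<le> b" for a b
  proof -
    have "1 / (real a + 1) \<le> 1 / (real M + 1)" "1 / (real b + 1) \<le> 1 / (real M + 1)"
      using that by (simp_all add: frac_le)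
    then have "\<delta>\<^sup>2 * (nrm (X a - X b))\<^sup>2 \<le> 8 / (real M + 1)"
      using step[of a b] by simp
    also have "\<dots> < \<delta>\<^sup>2 * e\<^sup>2"
      using M \<delta> e by (simp add: divide_less_eq mult.commute)
    finally have "(nrm (X a - X b))\<^sup>2 < e\<^sup>2"
      using \<delta> by simp
    then show ?thesis
      using e power2_less_imp_less by fastforce
  qed
  then show "\<exists>M. \<forall>a\<ge>M. \<forall>b\<ge>M. nrm (X a - X b) < e"
    by blast
qed

lemma energy_continuous:
  assumes "(\<lambda>k. nrm (X k - L)) \<longlonglongrightarrow> 0"
  shows "(\<lambda>k. energy P f (X k)) \<longlonglongrightarrow> energy P f L"
proof -
  obtain C where C: "\<And>x. nrm (P x) \<le> C * nrm x"
    using bounded_op_bound[OF P] by blast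
  obtain D where D: "\<And>x. cmod (f x) \<le> D * nrm x"
    using f_bound by blast
  have "\<bar>nrm (P x) - nrm (P y)\<bar> \<le> C * nrm (x - y)" for x y
    using nrm_reverse_triangle[of "P x" "P y"] C[of "x - y"] bounded_op_diff[OF P] by simp
  then have norm_conv: "(\<lambda>k. nrm (P (X k))) \<longlonglongrightarrow> nrm (P L)"
    by (rule tendsto_lipschitz[OF assms])
  moreover have "\<bar>Re (f x) - Re (f y)\<bar> \<le> D * nrm (x - y)" for x y
  proof -
    have "Re (f x) - Re (f y) = Re (f (x - y))"
      by (simp add: f_diff)
    then show ?thesis
      using abs_Re_le_cmod[of "f (x - y)"] D[of "x - y"] by simp
  qed
  then have Re_conv: "(\<lambda>k. Re (f (X k))) \<longlonglongrightarrow> Re (f L)"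
    by (rule tendsto_lipschitz[OF assms])
  from tendsto_diff[OF tendsto_power[OF norm_conv] tendsto_mult_left[OF Re_conv]]
  show ?thesis
    unfolding energy_def .
qed

lemma energy_attains_min: "\<exists>L. \<forall>x. energy P f L \<le> energy P f x"
proof -
  define m where "m = Inf (range (energy P f))"
  have min: "m \<le> energy P f x" for x
    unfolding m_def using energy_bdd_below by (simp add: cInf_lower)
  have "\<exists>x. energy P f x < m + 1 / (real k + 1)" for k :: nat
    using cInf_lessD[of "range (energy P f)" "m + 1 / (real k + 1)"] unfolding m_def
    by (simp add: add_pos_pos)
  then obtain X where X: "\<And>k. energy P f (X k) < m + 1 / (real k + 1)"
    by metis
  obtain L where L: "(\<lambda>k. nrm (X k - L)) \<longlonglongrightarrow> 0"
    using complete energy_minimizing_Cauchy[OF min X] by blast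
  have "(\<lambda>k. energy P f (X k)) \<longlonglongrightarrow> m"
  proof (rule tendsto_sandwich[where f = "\<lambda>_. m" and h = "\<lambda>k. m + 1 / (real k + 1)"])
    have "(\<lambda>k. 1 / (real k + 1)) = (\<lambda>k. inverse (real (Suc k)))"
      by (simp add: inverse_eq_divide add.commute)
    then have "(\<lambda>k. 1 / (real k + 1)) \<longlonglongrightarrow> 0"
      using LIMSEQ_inverse_real_of_nat by simp
    from tendsto_add[OF tendsto_const[of m] this]
    show "(\<lambda>k. m + 1 / (real k + 1)) \<longlonglongrightarrow> m"
      by simp
    show "\<forall>\<^sub>F k in sequentially. m \<le> energy P f (X k)"
      using min by simp
    show "\<forall>\<^sub>F k in sequentially. energy P f (X k) \<le> m + 1 / (real k + 1)"
      using X by (simp add: less_imp_le)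
  qed simp
  then have "energy P f L = m"
    using LIMSEQ_unique[OF energy_continuous[OF L]] by blast
  then show ?thesis
    using min by blast
qed

text \<open>First variation of the energy at the minimiser along \<open>L + t u\<close>; the choice
  \<open>t = - e cnj g\<close> with small \<open>e > 0\<close> forces the defect \<open>g\<close> to vanish.\<close>
lemma energy_min_represents:
  assumes min: "\<And>x. energy P f L \<le> energy P f x"
  shows "ip (P u) (P L) = f u"
proof -
  define g where "g = ip (P u) (P L) - f u"
  define A where "A = (nrm (P u))\<^sup>2"
  have var: "0 \<le> (cmod t)\<^sup>2 * A + 2 * Re (t * g)" for t
  proof -
    have "energy P f (L + sm t u)
        = energy P f L + (cmod t)\<^sup>2 * A + 2 * Re (cnj t * ip (P L) (P u)) - 2 * Re (t * f u)"
      unfolding energy_def A_def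
      by (simp add: bounded_op_add[OF P] bounded_op_scale[OF P] f_add f_scale
          nrm_add_square nrm_scale ip_scale_right power_mult_distrib)
    moreover have "Re (cnj t * ip (P L) (P u)) = Re (t * ip (P u) (P L))"
      by (simp add: ip_cnj[of "P u" "P L"] flip: complex_cnj_mult)
    ultimately show ?thesis
      using min[of "L + sm t u"] unfolding g_def by (simp add: algebra_simps)
  qed
  define e where "e = 1 / (A + 1)"
  have A: "A \<ge> 0"
    unfolding A_def by simp
  then have e: "e > 0" "e * A < 1"
    unfolding e_def by (simp_all add: field_simps)
  have "cnj g * g = of_real ((cmod g)\<^sup>2)"
    using complex_norm_square[of g] by (simp add: mult.commute)
  then have "Re (- (of_real e * cnj g) * g) = - e * (cmod g)\<^sup>2"
    by (simp add: mult.assoc)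
  moreover have "(cmod (of_real e * cnj g))\<^sup>2 = e\<^sup>2 * (cmod g)\<^sup>2"
    using e by (simp add: norm_mult power_mult_distrib)
  ultimately have "0 \<le> e\<^sup>2 * (cmod g)\<^sup>2 * A - 2 * e * (cmod g)\<^sup>2"
    using var[of "- (of_real e * cnj g)"] by simp
  then have "0 \<le> e * (e * A * (cmod g)\<^sup>2 - 2 * (cmod g)\<^sup>2)"
    by (simp add: algebra_simps power2_eq_square)
  then have "0 \<le> e * A * (cmod g)\<^sup>2 - 2 * (cmod g)\<^sup>2"
    using e by (simp add: zero_le_mult_iff)
  moreover have "e * A * (cmod g)\<^sup>2 \<le> (cmod g)\<^sup>2"
    using mult_left_le_one_le[of "(cmod g)\<^sup>2" "e * A"] e A by simp
  ultimately have "(cmod g)\<^sup>2 \<le> 0"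
    by linarith
  then have "g = 0"
    by simp
  then show ?thesis
    unfolding g_def by simp
qed

lemma riesz_representation_graph: "\<exists>b. \<forall>u. ip (P u) (P b) = f u"
  using energy_attains_min energy_min_represents by blast

end

end
context hilbert
begin

lemma bounded_op_id: "bounded_op sm ip id"
  unfolding bounded_op_def by (auto intro: exI[of _ 1])

lemma hadj_eq:
  assumes A: "bounded_op sm ip A"
  shows "ip (A x) y = ip x (hadj ip A y)"
proof -
  have "\<exists>b. \<forall>u. ip u b = ip (A u) y" for y
    using riesz_representation_graph[OF bounded_op_id _ zero_less_one bounded_functional_ip[OF A]]
    by simp
  then obtain B where B: "\<And>u y. ip u (B y) = ip (A u) y"
    by metis
  have "B' = B" if B': "\<forall>x y. ip (A x) y = ip x (B' y)" for B'
  proof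
    fix y
    have "ip (B' y - B y) (B' y - B y) = 0"
      using B B' by (simp add: ip_right.diff)
    then have "B' y - B y = 0"
      by (rule ip_self_eq_0)
    then show "B' y = B y"
      by simp
  qed
  then have "hadj ip A = B"
    unfolding hadj_def using B by (intro the_equality) auto
  then show ?thesis
    using B by simp
qed

lemma coercive_bounded_below:
  assumes coercive: "\<And>x. \<delta> * (nrm x)\<^sup>2 \<le> Re (ip (U x) x)"
  shows "\<delta> * nrm x \<le> nrm (U x)"
proof (cases "x = 0")
  case False
  have "\<delta> * nrm x * nrm x \<le> Re (ip (U x) x)"
    using coercive[of x] by (simp add: power2_eq_square mult.assoc)
  also have "\<dots> \<le> nrm (U x) * nrm x"
    using cauchy_schwarz complex_Re_le_cmod order_trans by blast
  finally show ?thesis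
    using nrm_pos[OF False] by simp
qed (simp add: nrm_nonneg)

lemma lax_milgram:
  assumes U: "bounded_op sm ip U" and \<delta>: "\<delta> > 0"
    and coercive: "\<And>x. \<delta> * (nrm x)\<^sup>2 \<le> Re (ip (U x) x)"
  shows "bij U"
proof (rule bijI)
  have zero: "x = 0" if "ip (U x) x = 0" for x
    using coercive[of x] \<delta> that by (simp add: mult_le_0_iff)
  show "inj U"
  proof (rule injI)
    fix x y
    assume "U x = U y"
    then show "x = y"
      using zero[of "x - y"] bounded_op_diff[OF U] by simp
  qed
  show "surj U"
    unfolding surj_def
  proof
    fix y
    obtain b where b: "\<And>u. ip (U u) (U b) = ip (U u) y"
      using riesz_representation_graph[OF U coercive_bounded_below[OF coercive] \<delta>
          bounded_functional_ip[OF U]] by blast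
    have "ip (U (U b - y)) (U b - y) = 0"
      using b by (simp add: ip_right.diff)
    then have "U b - y = 0"
      by (rule zero)
    then have "U b = y"
      by simp
    then show "\<exists>x. y = U x"
      by blast
  qed
qed

end

lemma inv_add:
  assumes "bij U" "\<And>x y. U (x + y) = U x + U y"
  shows "inv U (x + y) = inv U x + inv U y"
  using assms by (metis bij_inv_eq_iff)

lemma inv_commute:
  assumes "bij U" "\<And>x. T (U x) = U (T x)"
  shows "inv U (T y) = T (inv U y)"
  using assms by (metis bij_inv_eq_iff)
section \<open>Coercivity of the matrix blocks\<close>

lemma quadratic_form_hermitian_part:
  fixes v :: "nat \<Rightarrow> complex"
  shows "Re (\<Sum>i<m. \<Sum>j<m. cnj (v i) * (Z i j + cnj (Z j i)) * v j)
       = 2 * Re (\<Sum>i<m. \<Sum>j<m. cnj (v i) * v j * Z i j)"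
proof -
  define w where "w = (\<Sum>i<m. \<Sum>j<m. cnj (v i) * v j * Z i j)"
  have "(\<Sum>i<m. \<Sum>j<m. cnj (v i) * cnj (Z j i) * v j)
      = cnj (\<Sum>i<m. \<Sum>j<m. cnj (v j) * v i * Z j i)"
    by (simp add: mult_ac)
  also have "(\<Sum>i<m. \<Sum>j<m. cnj (v j) * v i * Z j i) = w"
    unfolding w_def by (rule sum.swap)
  finally have "(\<Sum>i<m. \<Sum>j<m. cnj (v i) * (Z i j + cnj (Z j i)) * v j) = w + cnj w"
    unfolding w_def by (simp add: sum.distrib algebra_simps)
  then show ?thesis
    unfolding w_def[symmetric] by simp
qed

context hilbert
begin

text \<open>The operator inequality \<open>Q + Q\<^sup>* \<ge> s\<close> tested on the simple tensor \<open>v \<otimes> x\<close>.\<close>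
lemma opmat_ge_scalar_tensor:
  assumes Q: "\<And>i j. i < m \<Longrightarrow> j < m \<Longrightarrow> bounded_op sm ip (Q i j)"
    and ge: "opmat_ge_scalar ip m (opmat_add Q (opmat_adj ip Q)) s"
  shows "s / 2 * (\<Sum>i<m. (cmod (v i))\<^sup>2) * (nrm x)\<^sup>2
         \<le> Re (\<Sum>i<m. \<Sum>j<m. cnj (v i) * v j * ip (Q i j x) x)"
proof -
  define y where "y i = sm (v i) x" for i
  define G where "G i j = cnj (v i) * v j * ip (Q i j x) x" for i j
  have QG: "ip (Q i j (y j)) (y i) = G i j" if "i < m" "j < m" for i j
    unfolding y_def G_def
    by (simp add: bounded_op_scale[OF Q[OF that]] ip_scale_left ip_scale_right mult_ac)
  have adj_QG: "ip (hadj ip (Q j i) (y j)) (y i) = cnj (G j i)" if "i < m" "j < m" for i j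
  proof -
    have "ip (hadj ip (Q j i) (y j)) (y i) = cnj (ip (y i) (hadj ip (Q j i) (y j)))"
      by (rule ip_cnj)
    also have "ip (y i) (hadj ip (Q j i) (y j)) = G j i"
      using hadj_eq[OF Q[of j i]] QG[of j i] that by simp
    finally show ?thesis .
  qed
  have "ip_n ip m (opmat_apply m (opmat_add Q (opmat_adj ip Q)) y) y
      = (\<Sum>i<m. \<Sum>j<m. ip (Q i j (y j)) (y i) + ip (hadj ip (Q j i) (y j)) (y i))"
    unfolding ip_n_def opmat_apply_def opmat_add_def opmat_adj_def
    by (simp add: ip_left.sum ip_add_left)
  also have "\<dots> = (\<Sum>i<m. \<Sum>j<m. G i j + cnj (G j i))"
    by (intro sum.cong refl) (simp add: QG adj_QG)
  also have "\<dots> = (\<Sum>i<m. \<Sum>j<m. G i j) + (\<Sum>i<m. \<Sum>j<m. cnj (G j i))"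
    by (simp add: sum.distrib)
  also have "(\<Sum>i<m. \<Sum>j<m. cnj (G j i)) = cnj (\<Sum>i<m. \<Sum>j<m. G i j)"
    by (subst sum.swap) simp
  finally have form: "Re (ip_n ip m (opmat_apply m (opmat_add Q (opmat_adj ip Q)) y) y)
      = 2 * Re (\<Sum>i<m. \<Sum>j<m. G i j)"
    by simp
  have "Re (ip_n ip m y y) = (\<Sum>i<m. (cmod (v i))\<^sup>2) * (nrm x)\<^sup>2"
    unfolding ip_n_def y_def
    by (simp add: ip_self_nrm nrm_scale power_mult_distrib sum_distrib_right)
  moreover have "s * Re (ip_n ip m y y)
      \<le> Re (ip_n ip m (opmat_apply m (opmat_add Q (opmat_adj ip Q)) y) y)"
    using ge unfolding opmat_ge_scalar_def by (simp add: allE[of _ y])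
  ultimately have "s * ((\<Sum>i<m. (cmod (v i))\<^sup>2) * (nrm x)\<^sup>2) \<le> 2 * Re (\<Sum>i<m. \<Sum>j<m. G i j)"
    using form by simp
  then show ?thesis
    unfolding G_def by (simp add: field_simps)
qed

end

context hilbert
begin

lemma bounded_op_zero: "bounded_op sm ip (\<lambda>x. 0)"
  unfolding bounded_op_def by (auto intro: exI[of _ 0])

lemma bounded_op_plus:
  assumes "bounded_op sm ip A" "bounded_op sm ip B"
  shows "bounded_op sm ip (\<lambda>x. A x + B x)"
proof -
  obtain C D where "\<And>x. nrm (A x) \<le> C * nrm x" "\<And>x. nrm (B x) \<le> D * nrm x"
    using bounded_op_bound assms by metis
  then have "nrm (A x + B x) \<le> (C + D) * nrm x" for x
    using nrm_triangle[of "A x" "B x"] by (smt (verit) distrib_right)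
  then show ?thesis
    using assms unfolding bounded_op_def by (auto simp: scale_right_distrib)
qed

lemma bounded_op_scale_op:
  assumes "bounded_op sm ip A"
  shows "bounded_op sm ip (\<lambda>x. sm c (A x))"
proof -
  obtain C where "\<And>x. nrm (A x) \<le> C * nrm x"
    using bounded_op_bound assms by metis
  then have "nrm (sm c (A x)) \<le> (cmod c * C) * nrm x" for x
    by (simp add: nrm_scale mult.assoc mult_left_mono)
  then show ?thesis
    using assms unfolding bounded_op_def
    by (intro conjI allI exI[of _ "cmod c * C"]) (simp_all add: scale_right_distrib mult.commute)
qed

lemma bounded_op_sum:
  assumes "finite I" "\<And>p. p \<in> I \<Longrightarrow> bounded_op sm ip (A p)"
  shows "bounded_op sm ip (\<lambda>x. \<Sum>p\<in>I. A p x)"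
  using assms by (induction I rule: finite_induct) (auto intro: bounded_op_zero bounded_op_plus)

lemma bounded_op_shift:
  assumes "bounded_op sm ip A"
  shows "bounded_op sm ip (\<lambda>x. A x - sm c x)"
  using bounded_op_plus[OF assms bounded_op_scale_op[OF bounded_op_id, of "- c"]] by simp

lemma shift_commute:
  assumes "bounded_op sm ip A" "bounded_op sm ip B" "\<And>x. A (B x) = B (A x)"
  shows "A (B x - sm d x) - sm c (B x - sm d x) = B (A x - sm c x) - sm d (A x - sm c x)"
  using assms by (simp add: bounded_op_diff bounded_op_scale scale_right_diff_distrib
      scale_left_commute[of c d] algebra_simps)

lemma block_combination_coercive:
  assumes Q: "\<And>i j. i < m \<Longrightarrow> j < m \<Longrightarrow> bounded_op sm ip (Q i j)"
    and ge: "opmat_ge_scalar ip m (opmat_add Q (opmat_adj ip Q)) s"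
    and Z: "Re (\<Sum>i<m. \<Sum>j<m. cnj (v i) * v j * Z i j) \<le> 0"
  shows "s / 2 * (\<Sum>i<m. (cmod (v i))\<^sup>2) * (nrm x)\<^sup>2
         \<le> Re (\<Sum>i<m. \<Sum>j<m. cnj (v i) * v j * ip (Q i j x - sm (Z i j) x) x)"
proof -
  have "(\<Sum>i<m. \<Sum>j<m. cnj (v i) * v j * ip (Q i j x - sm (Z i j) x) x)
      = (\<Sum>i<m. \<Sum>j<m. cnj (v i) * v j * ip (Q i j x) x)
        - (\<Sum>i<m. \<Sum>j<m. cnj (v i) * v j * Z i j) * of_real ((nrm x)\<^sup>2)"
    by (simp add: ip_left.diff ip_scale_left ip_self_nrm right_diff_distrib mult.assoc
        sum_subtractf sum_distrib_right)
  moreover have "Re ((\<Sum>i<m. \<Sum>j<m. cnj (v i) * v j * Z i j) * of_real ((nrm x)\<^sup>2)) \<le> 0"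
    using Z by (simp add: mult_nonpos_nonneg)
  ultimately show ?thesis
    using opmat_ge_scalar_tensor[OF Q ge, of v x] by simp
qed

end

lemma flat_family_commuting_bounded:
  assumes B: "comm_op_algebra sm ip B" and R: "\<forall>k<N. \<forall>i<n k. \<forall>j<n k. R k i j \<in> B"
    and p: "p \<in> idx_set N n" and q: "q \<in> idx_set N n"
  shows "bounded_op sm ip (flat_family R p)"
    and "flat_family R p (flat_family R q x) = flat_family R q (flat_family R p x)"
proof -
  have "flat_family R p \<in> B" "flat_family R q \<in> B"
    using p q R unfolding idx_set_def flat_family_def by auto
  then have "bounded_op sm ip (flat_family R p)"
    and "flat_family R p \<circ> flat_family R q = flat_family R q \<circ> flat_family R p"
    using B unfolding comm_op_algebra_def by blast+
  then show "bounded_op sm ip (flat_family R p)"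
    and "flat_family R p (flat_family R q x) = flat_family R q (flat_family R p x)"
    by (simp_all add: fun_eq_iff)
qed

lemma finite_idx_set: "finite (idx_set N n)"
proof -
  have "idx_set N n = (SIGMA k:{..<N}. {..<n k} \<times> {..<n k})"
    by (auto simp: idx_set_def)
  then show ?thesis
    by simp
qed

lemma sum_idx_set_block:
  assumes k: "k < N" and F: "\<And>p. p \<in> idx_set N n \<Longrightarrow> fst p \<noteq> k \<Longrightarrow> F p = 0"
  shows "(\<Sum>p\<in>idx_set N n. F p) = (\<Sum>i<n k. \<Sum>j<n k. F (k, i, j))"
proof -
  define A where "A = (\<lambda>(i, j). (k, i, j)) ` ({..<n k} \<times> {..<n k})"
  have "A \<subseteq> idx_set N n"
    using k by (auto simp: A_def idx_set_def)
  moreover have "\<forall>p\<in>idx_set N n - A. F p = 0"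
    using F by (force simp: A_def idx_set_def)
  ultimately have "(\<Sum>p\<in>idx_set N n. F p) = (\<Sum>p\<in>A. F p)"
    using sum.mono_neutral_right[OF finite_idx_set] by blast
  also have "\<dots> = (\<Sum>(i, j)\<in>{..<n k} \<times> {..<n k}. F (k, i, j))"
    unfolding A_def by (subst sum.reindex) (auto simp: inj_on_def case_prod_beta)
  also have "\<dots> = (\<Sum>i<n k. \<Sum>j<n k. F (k, i, j))"
    by (simp add: sum.cartesian_product)
  finally show ?thesis .
qed

lemma lex3_irrefl: "\<not> lex3 p p"
  by (cases p) (auto simp: lex3_def)

lemma lex3_total: "p \<noteq> q \<Longrightarrow> lex3 p q \<longleftrightarrow> \<not> lex3 q p"
  by (cases p; cases q) (auto simp: lex3_def)

context hilbert
begin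

text \<open>The contracting homotopy uses the coefficients \<open>U\<^sup>-\<^sup>1 c\<^sub>p\<close>, where the inverse of the
  combination \<open>U\<close> (Lax--Milgram) commutes with the family.\<close>
lemma koszul_exact_if_coercive_combination:
  assumes I: "finite I"
    and irrefl: "\<And>j. j \<in> I \<Longrightarrow> \<not> lt j j"
    and total: "\<And>j l. j \<in> I \<Longrightarrow> l \<in> I \<Longrightarrow> j \<noteq> l \<Longrightarrow> lt j l \<longleftrightarrow> \<not> lt l j"
    and T: "\<And>p. p \<in> I \<Longrightarrow> bounded_op sm ip (T p)"
    and comm: "\<And>p q x. p \<in> I \<Longrightarrow> q \<in> I \<Longrightarrow> T p (T q x) = T q (T p x)"
    and \<delta>: "\<delta> > 0" and coercive: "\<And>x. \<delta> * (nrm x)\<^sup>2 \<le> Re (ip (\<Sum>p\<in>I. sm (c p) (T p x)) x)"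
  shows "koszul_exact lt I T"
proof -
  define U where "U x = (\<Sum>p\<in>I. sm (c p) (T p x))" for x
  have U: "bounded_op sm ip U"
    unfolding U_def using bounded_op_sum[OF I, of "\<lambda>p x. sm (c p) (T p x)"] bounded_op_scale_op[OF T]
    by simp
  have U_T: "T q (U x) = U (T q x)" if q: "q \<in> I" for q x
  proof -
    interpret Tq: additive "T q"
      by unfold_locales (rule bounded_op_add[OF T[OF q]])
    show ?thesis
      unfolding U_def Tq.sum using q by (simp add: bounded_op_scale[OF T[OF q]] comm)
  qed
  have "bij U"
    using lax_milgram[OF U \<delta>] coercive unfolding U_def by blast
  interpret V: additive "inv U"
    by unfold_locales (rule inv_add[OF \<open>bij U\<close> bounded_op_add[OF U]])
  show ?thesis
  proof (rule koszul_data.koszul_exact_if_unit)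
    show "koszul_data lt I T (\<lambda>p x. inv U (sm (c p) x))"
    proof
      show "inv U (sm (c l) (x + y)) = inv U (sm (c l) x) + inv U (sm (c l) y)" for l x y
        by (simp add: scale_right_distrib V.add)
      show "T j (inv U (sm (c l) x)) = inv U (sm (c l) (T j x))" if "j \<in> I" for j l x
        using inv_commute[of U "T j" "sm (c l) x", OF \<open>bij U\<close> U_T[OF that]]
        by (simp add: bounded_op_scale[OF T[OF that]])
    qed (rule I irrefl total bounded_op_add[OF T] | assumption)+
    show "(\<Sum>p\<in>I. inv U (sm (c p) (T p x))) = x" for x
      using \<open>bij U\<close> unfolding V.sum[symmetric] U_def[symmetric] by (simp add: bij_is_inj)
  qed
qed

lemma koszul_exact_if_not_Pi:
  assumes B: "comm_op_algebra sm ip B" and R: "\<forall>k<N. \<forall>i<n k. \<forall>j<n k. R k i j \<in> B"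
    and k: "k < N" and s: "s > 0"
    and ge: "opmat_ge_scalar ip (n k) (opmat_add (R k) (opmat_adj ip (R k))) s"
    and v: "\<exists>i<n k. v i \<noteq> 0"
    and not_Pi: "Re (\<Sum>i<n k. \<Sum>j<n k. cnj (v i) * (z (k, i, j) + cnj (z (k, j, i))) * v j) \<le> 0"
  shows "koszul_exact lex3 (idx_set N n) (\<lambda>p x. flat_family R p x - sm (z p) x)"
proof (rule koszul_exact_if_coercive_combination)
  define c where "c p = (if fst p = k then cnj (v (fst (snd p))) * v (snd (snd p)) else 0)"
    for p :: "nat \<times> nat \<times> nat"
  define \<delta> where "\<delta> = s / 2 * (\<Sum>i<n k. (cmod (v i))\<^sup>2)"
  obtain i where "i < n k" "v i \<noteq> 0"
    using v by blast
  then have "(\<Sum>i<n k. (cmod (v i))\<^sup>2) > 0"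
    by (intro sum_pos2[of _ i]) auto
  then show "\<delta> > 0"
    unfolding \<delta>_def using s by simp
  have R_bounded: "bounded_op sm ip (R k i j)" if "i < n k" "j < n k" for i j
    using flat_family_commuting_bounded(1)[OF B R] that k by (force simp: idx_set_def flat_family_def)
  show "\<delta> * (nrm x)\<^sup>2 \<le> Re (ip (\<Sum>p\<in>idx_set N n. sm (c p) (flat_family R p x - sm (z p) x)) x)" for x
  proof -
    have "ip (\<Sum>p\<in>idx_set N n. sm (c p) (flat_family R p x - sm (z p) x)) x
        = (\<Sum>i<n k. \<Sum>j<n k. cnj (v i) * v j * ip (R k i j x - sm (z (k, i, j)) x) x)"
      by (simp add: ip_left.sum ip_scale_left sum_idx_set_block[OF k] c_def flat_family_def)
    moreover have "Re (\<Sum>i<n k. \<Sum>j<n k. cnj (v i) * v j * z (k, i, j)) \<le> 0"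
      using not_Pi quadratic_form_hermitian_part[of v "\<lambda>i j. z (k, i, j)"] by simp
    ultimately show ?thesis
      unfolding \<delta>_def using block_combination_coercive[OF R_bounded ge] by simp
  qed
  show "bounded_op sm ip (\<lambda>x. flat_family R p x - sm (z p) x)" if "p \<in> idx_set N n" for p
    using flat_family_commuting_bounded(1)[OF B R that that] by (rule bounded_op_shift)
  show "flat_family R p (flat_family R q x - sm (z q) x) - sm (z p) (flat_family R q x - sm (z q) x)
      = flat_family R q (flat_family R p x - sm (z p) x) - sm (z q) (flat_family R p x - sm (z p) x)"
    if "p \<in> idx_set N n" "q \<in> idx_set N n" for p q x
    using flat_family_commuting_bounded[OF B R] that by (intro shift_commute) blast+
qed (rule finite_idx_set lex3_irrefl lex3_total | assumption)+

end

theorem theorem3p2: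
  fixes sm :: "complex \<Rightarrow> 'h::ab_group_add \<Rightarrow> 'h"
    and ip :: "'h \<Rightarrow> 'h \<Rightarrow> complex"
    and N :: nat and n :: "nat \<Rightarrow> nat"
    and R :: "nat \<Rightarrow> nat \<Rightarrow> nat \<Rightarrow> 'h \<Rightarrow> 'h"
  assumes "\<forall>k<N. n k > 0"
    and "class_A sm ip N n R"
  shows "\<forall>z\<in>taylor_spectrum sm lex3 (idx_set N n) (flat_family R).
           \<forall>k<N. Pi_mat (n k) (\<lambda>i j. z (k, i, j))"
proof (intro ballI allI impI)
  fix z k
  assume z: "z \<in> taylor_spectrum sm lex3 (idx_set N n) (flat_family R)" and k: "k < N"
  obtain B s where H: "hilbert_space sm ip" and B: "comm_op_algebra sm ip B"
    and R: "\<forall>k<N. \<forall>i<n k. \<forall>j<n k. R k i j \<in> B" and s: "s > 0"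
    and ge: "\<forall>k<N. opmat_ge_scalar ip (n k) (opmat_add (R k) (opmat_adj ip (R k))) s"
    using assms(2) unfolding class_A_def by blast
  show "Pi_mat (n k) (\<lambda>i j. z (k, i, j))"
    unfolding Pi_mat_def
  proof (intro allI impI)
    fix v :: "nat \<Rightarrow> complex"
    assume "\<exists>i<n k. v i \<noteq> 0"
    show "Re (\<Sum>i<n k. \<Sum>j<n k. cnj (v i) * (z (k, i, j) + cnj (z (k, j, i))) * v j) > 0"
    proof (rule ccontr)
      assume "\<not> ?thesis"
      with \<open>\<exists>i<n k. v i \<noteq> 0\<close> have "koszul_exact lex3 (idx_set N n) (\<lambda>p x. flat_family R p x - sm (z p) x)"
        using hilbert.koszul_exact_if_not_Pi[OF hilbert_space_imp_hilbert[OF H] B R k s ge[rule_format, OF k]]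
        by simp
      then show False
        using z unfolding taylor_spectrum_def by blast
    qed
  qed
qed
end
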